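(* Let $R$ be a unital associative ring, $n=3$ and $k\ge2$. Then $${\cal S}={\rm dom}(J)\cap{\rm dom}(J^{-1})={\rm dom}(J^k)\quad\text{and}\quad \widehat{\cal S}={\rm dom}(\Phi)\cap{\rm dom}(\Phi^{-1})={\rm dom}(\Phi^k).$$ Furthermore, $J$ restricted to ${\cal S}$ is a bijection from ${\cal S}$ onto itself, and $\Phi$ restricted to $\widehat{\cal S}$ is a bijection from $\widehat{\cal S}$ onto itself.
   Context: $R^*$: units of $R$. $M_3^*(R)$: invertible $3\times3$ matrices; $M_3^\star(R)$: matrices with all entries in $R^*$. $J_1(M)=M^{-1}$ on $M_3^*(R)$; $J_2(M)_{jk}=(M_{kj})^{-1}$ on $M_3^\star(R)$; $J=J_2\circ J_1$, $J^{-1}=J_1\circ J_2$, where $g\circ f$ has domain $\{x\in{\rm dom}(f):f(x)\in{\rm dom}(g)\}$, and powers are iterated compositions. $\widehat M_3(R)$: matrices whose first row and column consist of $1$'s. For $A=\{a_{j,k}\}\in M_3^\star(R)$: $\Lambda^L(A)_{j,k}=a_{1,1}a_{j,1}^{-1}a_{j,k}a_{1,k}^{-1}$, $\Lambda^R(A)_{j,k}=a_{j,1}^{-1}a_{j,k}a_{1,k}^{-1}a_{1,1}$. $\Phi(A)=J_2(\Lambda^L(A^{-1}))$ with ${\rm dom}(\Phi)={\rm dom}(J)\cap\widehat M_3(R)\cap M_3^\star(R)$; $\Phi^{-1}(A)=\Lambda^R(J^{-1}(A))$ with domain $\widehat M_3(R)\cap\{M\in{\rm dom}(J^{-1}):J^{-1}(M)\in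 M_3^\star(R)\}$. ${\cal S}=\{M\in M_3(R):$ all square submatrices of $M$ (including $M$ and its $1\times1$ submatrices) are invertible and $J_2(M)$ is invertible$\}$, and $\widehat{\cal S}={\cal S}\cap\widehat M_3(R)$. *)

theory Defs
  imports "HOL-Analysis.Analysis"
begin

text \<open>3x3 matrices over a unital associative ring 'a (class ring_1) are 'a^3^3;
  M $ j $ k is the entry in row j, column k. The indices of type 3 are 1, 2, 3 (= 0);
  index 1 plays the role of the first row/column.
  Partial maps are modelled as option-valued functions; composition is map_comp
  whose domain is exactly that of the paper.\<close>

type_synonym 'a mat3 = "'a ^ 3 ^ 3"

definition is_unit :: "'a::ring_1 \<Rightarrow> bool" where
  "is_unit x \<longleftrightarrow> (\<exists>y. x * y = 1 \<and> y * x = 1)"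

definition uinv :: "'a::ring_1 \<Rightarrow> 'a" where
  "uinv x = (THE y. x * y = 1 \<and> y * x = 1)"

definition units_mat :: "'a::ring_1 mat3 \<Rightarrow> bool" where
  "units_mat M \<longleftrightarrow> (\<forall>j k. is_unit (M $ j $ k))"

definition J1 :: "'a::ring_1 mat3 \<Rightarrow> 'a mat3 option" where
  "J1 M = (if invertible M then Some (matrix_inv M) else None)"

definition J2 :: "'a::ring_1 mat3 \<Rightarrow> 'a mat3 option" where
  "J2 M = (if units_mat M then Some (\<chi> j k. uinv (M $ k $ j)) else None)"

definition J :: "'a::ring_1 mat3 \<Rightarrow> 'a mat3 option" where
  "J = J2 \<circ>\<^sub>m J1"

definition Jinv :: "'a::ring_1 mat3 \<Rightarrow> 'a mat3 option" where
  "Jinv = J1 \<circ>\<^sub>m J2"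

fun mpow :: "('b \<Rightarrow> 'b option) \<Rightarrow> nat \<Rightarrow> 'b \<Rightarrow> 'b option" where
  "mpow f 0 = Some"
| "mpow f (Suc k) = f \<circ>\<^sub>m mpow f k"

definition hat_mat :: "'a::ring_1 mat3 \<Rightarrow> bool" where
  "hat_mat M \<longleftrightarrow> (\<forall>k. M $ 1 $ k = 1 \<and> M $ k $ 1 = 1)"

definition LambdaL :: "'a::ring_1 mat3 \<Rightarrow> 'a mat3" where
  "LambdaL A = (\<chi> j k. A $ 1 $ 1 * uinv (A $ j $ 1) * A $ j $ k * uinv (A $ 1 $ k))"

definition LambdaR :: "'a::ring_1 mat3 \<Rightarrow> 'a mat3" where
  "LambdaR A = (\<chi> j k. uinv (A $ j $ 1) * A $ j $ k * uinv (A $ 1 $ k) * A $ 1 $ 1)"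

definition Phi :: "'a::ring_1 mat3 \<Rightarrow> 'a mat3 option" where
  "Phi A = (if A \<in> dom J \<and> hat_mat A \<and> units_mat A
            then J2 (LambdaL (matrix_inv A)) else None)"

definition Phiinv :: "'a::ring_1 mat3 \<Rightarrow> 'a mat3 option" where
  "Phiinv A = (if hat_mat A \<and> A \<in> dom Jinv \<and> units_mat (the (Jinv A))
               then Some (LambdaR (the (Jinv A))) else None)"

text \<open>The square submatrix of M with row set I and column set K (card I = card K)
  is invertible: there is a K x I matrix N with M|_{I,K} N = 1 and N M|_{I,K} = 1.
  This does not depend on the ordering of rows and columns.\<close>
definition sub_invertible :: "'a::ring_1 mat3 \<Rightarrow> 3 set \<Rightarrow> 3 set \<Rightarrow> bool" where
  "sub_invertible M I K \<longleftrightarrow>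
     (\<exists>N :: 3 \<Rightarrow> 3 \<Rightarrow> 'a.
        (\<forall>i\<in>I. \<forall>i'\<in>I. (\<Sum>k\<in>K. M $ i $ k * N k i') = (if i = i' then 1 else 0)) \<and>
        (\<forall>k\<in>K. \<forall>k'\<in>K. (\<Sum>i\<in>I. N k i * M $ i $ k') = (if k = k' then 1 else 0)))"

definition S_set :: "'a::ring_1 mat3 set" where
  "S_set = {M. (\<forall>I K. I \<noteq> {} \<and> card I = card K \<longrightarrow> sub_invertible M I K) \<and>
               (\<exists>N. J2 M = Some N \<and> invertible N)}"

definition S_hat :: "'a::ring_1 mat3 set" where
  "S_hat = S_set \<inter> {M. hat_mat M}"

end

theory Submission
  imports Defs
begin

text \<open>For \<open>M\<close> invertible with inverse \<open>N\<close>, Jacobi's complementary minor theorem, proved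
  with Schur complements, says that a \<open>2\<times>2\<close> minor of \<open>M\<close> is invertible iff the complementary
  entry of \<open>N\<close> is a unit. Hence all square submatrices of \<open>M\<close> are invertible iff \<open>M\<close> and \<open>N\<close>
  have unit entries, which is what \<open>J = J\<^sub>2 \<circ> J\<^sub>1\<close> and \<open>J\<^sup>-\<^sup>1 = J\<^sub>1 \<circ> J\<^sub>2\<close> need in order to be
  defined. A Schur complement computation shows that \<open>J\<^sub>2(M)\<close> is invertible iff a \<open>2\<times>2\<close> matrix
  of quasideterminants of \<open>M\<close> is; by the duality of quasideterminants of inverse matrices, this
  matrix is, up to inverting its entries and reversing their order, the one for \<open>N\<close>, so
  \<open>J\<^sub>2(M)\<close> is invertible iff \<open>J\<^sub>2(N)\<close> is. Consequently \<open>J\<close> and \<open>J\<^sup>-\<^sup>1\<close> map \<open>S\<close> into itself,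
  and a matrix on which \<open>J\<close> can be applied twice already lies in \<open>S\<close>. The maps \<open>\<Phi>\<close> and
  \<open>\<Phi>\<^sup>-\<^sup>1\<close> differ from \<open>J\<close> and \<open>J\<^sup>-\<^sup>1\<close> only by diagonal rescalings with unit entries, which
  preserve \<open>S\<close>.\<close>

lemma uinv_unique:
  fixes x :: "'a::ring_1"
  assumes "x * y = 1" and "y * x = 1"
  shows "uinv x = y"
  unfolding uinv_def
proof (rule the_equality)
  show "x * y = 1 \<and> y * x = 1" using assms by simp
next
  fix z assume z: "x * z = 1 \<and> z * x = 1"
  have "z = y * (x * z)" using assms(2) by (simp add: mult.assoc[symmetric])
  then show "z = y" using z by simp
qed

lemma is_unitI: fixes x :: "'a::ring_1" shows "x * y = 1 \<Longrightarrow> y * x = 1 \<Longrightarrow> is_unit x"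
  unfolding is_unit_def by blast

lemma unit_mult_uinv:
  fixes x :: "'a::ring_1"
  assumes "is_unit x"
  shows "x * uinv x = 1" and "uinv x * x = 1"
  using assms uinv_unique unfolding is_unit_def by metis+

lemma unit_mult_uinv_cancel:
  fixes x :: "'a::ring_1"
  assumes "is_unit x"
  shows "x * (uinv x * y) = y" and "uinv x * (x * y) = y"
    and "y * x * uinv x = y" and "y * uinv x * x = y"
  using unit_mult_uinv[OF assms]
  by (simp_all add: mult.assoc flip: mult.assoc[of x] mult.assoc[of "uinv x"])

lemma is_unit_uinv: fixes x :: "'a::ring_1" shows "is_unit x \<Longrightarrow> is_unit (uinv x)"
  using unit_mult_uinv is_unitI by metis

lemma uinv_uinv: fixes x :: "'a::ring_1" shows "is_unit x \<Longrightarrow> uinv (uinv x) = x"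
  using unit_mult_uinv uinv_unique by metis

lemma
  fixes x y :: "'a::ring_1"
  assumes "is_unit x" and "is_unit y"
  shows is_unit_mult: "is_unit (x * y)"
    and uinv_mult: "uinv (x * y) = uinv y * uinv x"
proof -
  have "x * y * (uinv y * uinv x) = 1" and "uinv y * uinv x * (x * y) = 1"
    by (simp_all add: mult.assoc unit_mult_uinv_cancel assms unit_mult_uinv)
  then show "is_unit (x * y)" and "uinv (x * y) = uinv y * uinv x"
    using is_unitI uinv_unique by blast+
qed

lemma uinv_one [simp]: "uinv (1::'a::ring_1) = 1"
  by (rule uinv_unique) simp_all

lemma is_unit_minus_iff: fixes x :: "'a::ring_1" shows "is_unit (- x) \<longleftrightarrow> is_unit x"
  using is_unitI unit_mult_uinv by (metis minus_minus minus_mult_minus)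

lemma is_unit_mult_units_iff:
  fixes x :: "'a::ring_1"
  assumes "is_unit u" and "is_unit v"
  shows "is_unit (u * x * v) \<longleftrightarrow> is_unit x"
proof
  assume "is_unit (u * x * v)"
  moreover have "x = uinv u * (u * x * v) * uinv v"
    by (simp add: mult.assoc unit_mult_uinv_cancel unit_mult_uinv assms)
  ultimately show "is_unit x" by (metis assms is_unit_mult is_unit_uinv)
qed (use assms is_unit_mult in blast)


section \<open>Invertible 2\<times>2 matrices\<close>

text \<open>The matrices are written row by row: \<open>(x y; z w)\<close> is a two-sided inverse of \<open>(a b; c d)\<close>.\<close>

definition inverse2 :: "'a::ring_1 \<Rightarrow> 'a \<Rightarrow> 'a \<Rightarrow> 'a \<Rightarrow> 'a \<Rightarrow> 'a \<Rightarrow> 'a \<Rightarrow> 'a \<Rightarrow> bool" where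
  "inverse2 a b c d x y z w \<longleftrightarrow>
     a*x + b*z = 1 \<and> a*y + b*w = 0 \<and> c*x + d*z = 0 \<and> c*y + d*w = 1 \<and>
     x*a + y*c = 1 \<and> x*b + y*d = 0 \<and> z*a + w*c = 0 \<and> z*b + w*d = 1"

definition invertible2 :: "'a::ring_1 \<Rightarrow> 'a \<Rightarrow> 'a \<Rightarrow> 'a \<Rightarrow> bool" where
  "invertible2 a b c d \<longleftrightarrow> (\<exists>x y z w. inverse2 a b c d x y z w)"

lemma inverse2_sym: "inverse2 a b c d x y z w \<Longrightarrow> inverse2 x y z w a b c d"
  unfolding inverse2_def by simp

lemma invertible2_rotate_iff: "invertible2 a b c d \<longleftrightarrow> invertible2 d c b a"
proof -
  have "inverse2 d c b a w z y x" if "inverse2 a b c d x y z w" for a b c d x y z w :: 'a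
    using that unfolding inverse2_def by (simp add: add.commute)
  then show ?thesis unfolding invertible2_def by meson
qed

lemma inverse2_of_unit_schur:
  fixes a :: "'a::ring_1"
  assumes u: "is_unit a" and s: "is_unit (d - c * uinv a * b)"
  defines "t \<equiv> uinv (d - c * uinv a * b)"
  shows "inverse2 a b c d (uinv a + uinv a*b*t*c*uinv a) (- (uinv a*b*t)) (- (t*c*uinv a)) t"
  unfolding inverse2_def
proof (intro conjI)
  let ?a = "uinv a" and ?s = "d - c * uinv a * b"
  note ts = unit_mult_uinv[OF s, folded t_def] and aa = unit_mult_uinv[OF u]
    and cancel = unit_mult_uinv_cancel[OF u]
  show "a * (?a + ?a*b*t*c*?a) + b * (- (t*c*?a)) = 1"
    by (simp add: algebra_simps cancel aa)
  show "a * (- (?a*b*t)) + b * t = 0"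
    by (simp add: algebra_simps cancel)
  have "c * (?a + ?a*b*t*c*?a) + d * (- (t*c*?a)) = c*?a - ?s*t*c*?a"
    by (simp add: algebra_simps)
  then show "c * (?a + ?a*b*t*c*?a) + d * (- (t*c*?a)) = 0" using ts by simp
  have "c * (- (?a*b*t)) + d * t = ?s * t" by (simp add: algebra_simps)
  then show "c * (- (?a*b*t)) + d * t = 1" using ts by simp
  show "(?a + ?a*b*t*c*?a) * a + (- (?a*b*t)) * c = 1"
    by (simp add: algebra_simps cancel aa)
  have "(?a + ?a*b*t*c*?a) * b + (- (?a*b*t)) * d = ?a*b - ?a*b*(t*?s)"
    by (simp add: algebra_simps)
  then show "(?a + ?a*b*t*c*?a) * b + (- (?a*b*t)) * d = 0" using ts by simp
  show "(- (t*c*?a)) * a + t * c = 0"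
    by (simp add: algebra_simps cancel aa)
  have "(- (t*c*?a)) * b + t * d = t * ?s" by (simp add: algebra_simps)
  then show "(- (t*c*?a)) * b + t * d = 1" using ts by simp
qed

lemma invertible2_iff_unit_schur:
  fixes a :: "'a::ring_1"
  assumes u: "is_unit a"
  shows "invertible2 a b c d \<longleftrightarrow> is_unit (d - c * uinv a * b)"
proof
  let ?a = "uinv a"
  assume "invertible2 a b c d"
  then obtain y z w where e: "a*y + b*w = 0" "c*y + d*w = 1" "z*a + w*c = 0" "z*b + w*d = 1"
    unfolding invertible2_def inverse2_def by blast
  have y: "y = - (?a * b * w)"
  proof -
    have "y = ?a * (a*y)" by (simp add: unit_mult_uinv_cancel u)
    also have "a*y = - (b*w)" using e(1) by (simp add: eq_neg_iff_add_eq_0)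
    finally show ?thesis by (simp add: mult.assoc)
  qed
  have z: "z = - (w * c * ?a)"
  proof -
    have "z = (z*a) * ?a" by (simp add: unit_mult_uinv_cancel u)
    also have "z*a = - (w*c)" using e(3) by (simp add: eq_neg_iff_add_eq_0)
    finally show ?thesis by (simp add: mult.assoc)
  qed
  have "(d - c * ?a * b) * w = 1" using e(2) unfolding y by (simp add: algebra_simps)
  moreover have "w * (d - c * ?a * b) = 1" using e(4) unfolding z by (simp add: algebra_simps)
  ultimately show "is_unit (d - c * ?a * b)" by (rule is_unitI)
next
  assume "is_unit (d - c * uinv a * b)"
  then show "invertible2 a b c d"
    unfolding invertible2_def using inverse2_of_unit_schur[OF u] by blast
qed

lemma invertible2_uinv_iff:
  fixes a :: "'a::ring_1"
  assumes ua: "is_unit a" and ub: "is_unit b" and uc: "is_unit c" and ud: "is_unit d"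
  shows "invertible2 (uinv a) (uinv c) (uinv b) (uinv d) \<longleftrightarrow> invertible2 a b c d"
proof -
  have "invertible2 (uinv a) (uinv c) (uinv b) (uinv d) \<longleftrightarrow> is_unit (uinv d - uinv b * a * uinv c)"
    using invertible2_iff_unit_schur[OF is_unit_uinv[OF ua]] uinv_uinv[OF ua] by simp
  also have "uinv d - uinv b * a * uinv c = uinv b * (b * uinv d * c - a) * uinv c"
    by (simp add: algebra_simps unit_mult_uinv_cancel ub uc unit_mult_uinv)
  also have "is_unit \<dots> \<longleftrightarrow> is_unit (b * uinv d * c - a)"
    by (rule is_unit_mult_units_iff) (simp_all add: is_unit_uinv ub uc)
  also have "\<dots> \<longleftrightarrow> is_unit (a - b * uinv d * c)"
    by (metis minus_diff_eq is_unit_minus_iff)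
  also have "\<dots> \<longleftrightarrow> invertible2 d c b a" using invertible2_iff_unit_schur[OF ud] by simp
  also have "\<dots> \<longleftrightarrow> invertible2 a b c d" using invertible2_rotate_iff by metis
  finally show ?thesis .
qed

lemma invertible2_scale:
  fixes a :: "'a::ring_1"
  assumes u1: "is_unit u1" and u2: "is_unit u2" and p1: "is_unit p1" and p2: "is_unit p2"
    and "invertible2 a b c d"
  shows "invertible2 (u1*a*p1) (u1*b*p2) (u2*c*p1) (u2*d*p2)"
proof -
  obtain x y z w where e: "a*x + b*z = 1" "a*y + b*w = 0" "c*x + d*z = 0" "c*y + d*w = 1"
      "x*a + y*c = 1" "x*b + y*d = 0" "z*a + w*c = 0" "z*b + w*d = 1"
    using assms(5) unfolding invertible2_def inverse2_def by blast
  note cancel = unit_mult_uinv_cancel[OF u1] unit_mult_uinv_cancel[OF u2]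
    unit_mult_uinv_cancel[OF p1] unit_mult_uinv_cancel[OF p2]
    unit_mult_uinv[OF u1] unit_mult_uinv[OF u2] unit_mult_uinv[OF p1] unit_mult_uinv[OF p2]
  let ?x = "uinv p1 * x * uinv u1" and ?y = "uinv p1 * y * uinv u2"
  let ?z = "uinv p2 * z * uinv u1" and ?w = "uinv p2 * w * uinv u2"
  have "inverse2 (u1*a*p1) (u1*b*p2) (u2*c*p1) (u2*d*p2) ?x ?y ?z ?w"
    unfolding inverse2_def
  proof (intro conjI)
    have "u1*a*p1 * ?x + u1*b*p2 * ?z = u1*(a*x+b*z)*uinv u1" by (simp add: algebra_simps cancel)
    then show "u1*a*p1 * ?x + u1*b*p2 * ?z = 1" using e cancel by simp
    have "u1*a*p1 * ?y + u1*b*p2 * ?w = u1*(a*y+b*w)*uinv u2" by (simp add: algebra_simps cancel)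
    then show "u1*a*p1 * ?y + u1*b*p2 * ?w = 0" using e by simp
    have "u2*c*p1 * ?x + u2*d*p2 * ?z = u2*(c*x+d*z)*uinv u1" by (simp add: algebra_simps cancel)
    then show "u2*c*p1 * ?x + u2*d*p2 * ?z = 0" using e by simp
    have "u2*c*p1 * ?y + u2*d*p2 * ?w = u2*(c*y+d*w)*uinv u2" by (simp add: algebra_simps cancel)
    then show "u2*c*p1 * ?y + u2*d*p2 * ?w = 1" using e cancel by simp
    have "?x * (u1*a*p1) + ?y * (u2*c*p1) = uinv p1*(x*a+y*c)*p1" by (simp add: algebra_simps cancel)
    then show "?x * (u1*a*p1) + ?y * (u2*c*p1) = 1" using e cancel by simp
    have "?x * (u1*b*p2) + ?y * (u2*d*p2) = uinv p1*(x*b+y*d)*p2" by (simp add: algebra_simps cancel)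
    then show "?x * (u1*b*p2) + ?y * (u2*d*p2) = 0" using e by simp
    have "?z * (u1*a*p1) + ?w * (u2*c*p1) = uinv p2*(z*a+w*c)*p1" by (simp add: algebra_simps cancel)
    then show "?z * (u1*a*p1) + ?w * (u2*c*p1) = 0" using e by simp
    have "?z * (u1*b*p2) + ?w * (u2*d*p2) = uinv p2*(z*b+w*d)*p2" by (simp add: algebra_simps cancel)
    then show "?z * (u1*b*p2) + ?w * (u2*d*p2) = 1" using e cancel by simp
  qed
  then show ?thesis unfolding invertible2_def by blast
qed

lemma invertible2_scale_iff:
  fixes a :: "'a::ring_1"
  assumes u1: "is_unit u1" and u2: "is_unit u2" and p1: "is_unit p1" and p2: "is_unit p2"
  shows "invertible2 (u1*a*p1) (u1*b*p2) (u2*c*p1) (u2*d*p2) \<longleftrightarrow> invertible2 a b c d"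
proof
  assume "invertible2 (u1*a*p1) (u1*b*p2) (u2*c*p1) (u2*d*p2)"
  from invertible2_scale[OF is_unit_uinv[OF u1] is_unit_uinv[OF u2]
      is_unit_uinv[OF p1] is_unit_uinv[OF p2] this]
  show "invertible2 a b c d" by (simp add: mult.assoc unit_mult_uinv_cancel unit_mult_uinv u1 u2 p1 p2)
qed (rule invertible2_scale[OF assms])


lemma matrix_mult_entry:
  fixes A :: "'a::semiring_1^'n^'m" and B :: "'a^'p^'n"
  shows "(A ** B) $ i $ j = (\<Sum>k\<in>UNIV. A $ i $ k * B $ k $ j)"
  by (simp add: matrix_matrix_mult_def)

lemma mat_1_entry: "(mat 1 :: 'a::semiring_1^'n^'n) $ i $ j = (if i = j then 1 else 0)"
  by (simp add: mat_def)

lemma invertibleI: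
  fixes A :: "'a::semiring_1^'n^'m"
  shows "A ** B = mat 1 \<Longrightarrow> B ** A = mat 1 \<Longrightarrow> invertible A"
  unfolding invertible_def by blast

lemma
  fixes A :: "'a::semiring_1^'n^'m"
  assumes "invertible A"
  shows matrix_inv_right: "A ** matrix_inv A = mat 1"
    and matrix_inv_left: "matrix_inv A ** A = mat 1"
  using someI_ex[OF assms[unfolded invertible_def]] unfolding matrix_inv_def by auto

lemma matrix_inv_unique:
  fixes A :: "'a::semiring_1^'n^'m"
  assumes "A ** B = mat 1" and "B ** A = mat 1"
  shows "matrix_inv A = B"
proof -
  have "matrix_inv A = (matrix_inv A ** A) ** B"
    by (simp add: assms(1) flip: matrix_mul_assoc)
  then show ?thesis using matrix_inv_left[OF invertibleI[OF assms]] by simp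
qed

lemma
  fixes A :: "'a::semiring_1^'n^'m"
  assumes "invertible A"
  shows invertible_matrix_inv: "invertible (matrix_inv A)"
    and matrix_inv_matrix_inv: "matrix_inv (matrix_inv A) = A"
  using matrix_inv_right[OF assms] matrix_inv_left[OF assms] invertibleI matrix_inv_unique
  by blast+

lemma sum_UNIV_3_distinct:
  assumes "a \<noteq> b" "a \<noteq> c" "b \<noteq> c"
  shows "sum f (UNIV::3 set) = f a + f b + f c"
proof -
  have "{a, b, c} = (UNIV::3 set)"
    by (rule card_subset_eq) (simp_all add: assms)
  then show ?thesis using assms by (simp add: add.assoc flip: \<open>{a, b, c} = UNIV\<close>)
qed

lemma matrix_mult_eq_mat_1_expand:
  fixes A B :: "'a::ring_1 mat3"
  assumes "A ** B = mat 1" and "a \<noteq> b" "a \<noteq> c" "b \<noteq> c"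
  shows "A$i$a * B$a$j + A$i$b * B$b$j + A$i$c * B$c$j = (if i = j then 1 else 0)"
proof -
  have "(A ** B) $ i $ j = A$i$a * B$a$j + A$i$b * B$b$j + A$i$c * B$c$j"
    unfolding matrix_mult_entry by (rule sum_UNIV_3_distinct[OF assms(2-4)])
  then show ?thesis using assms(1) by (simp add: mat_1_entry)
qed

lemma mat3_eqI:
  fixes A B :: "'a mat3"
  assumes "A$1$1 = B$1$1" "A$1$2 = B$1$2" "A$1$3 = B$1$3"
    "A$2$1 = B$2$1" "A$2$2 = B$2$2" "A$2$3 = B$2$3"
    "A$3$1 = B$3$1" "A$3$2 = B$3$2" "A$3$3 = B$3$3"
  shows "A = B"
  unfolding vec_eq_iff forall_3 using assms by simp

definition mat3_of :: "'a \<Rightarrow> 'a \<Rightarrow> 'a \<Rightarrow> 'a \<Rightarrow> 'a \<Rightarrow> 'a \<Rightarrow> 'a \<Rightarrow> 'a \<Rightarrow> 'a \<Rightarrow> 'a mat3" where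
  "mat3_of a b c d e f g h i = (\<chi> j k.
     if j = 1 then (if k = 1 then a else if k = 2 then b else c)
     else if j = 2 then (if k = 1 then d else if k = 2 then e else f)
     else (if k = 1 then g else if k = 2 then h else i))"

lemma mat3_of_entries [simp]:
  "mat3_of a b c d e f g h i $ 1 $ 1 = a" "mat3_of a b c d e f g h i $ 1 $ 2 = b"
  "mat3_of a b c d e f g h i $ 1 $ 3 = c" "mat3_of a b c d e f g h i $ 2 $ 1 = d"
  "mat3_of a b c d e f g h i $ 2 $ 2 = e" "mat3_of a b c d e f g h i $ 2 $ 3 = f"
  "mat3_of a b c d e f g h i $ 3 $ 1 = g" "mat3_of a b c d e f g h i $ 3 $ 2 = h"
  "mat3_of a b c d e f g h i $ 3 $ 3 = i"
  by (simp_all add: mat3_of_def)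

lemma matrix_mult_3:
  "((A::'a::ring_1 mat3) ** B) $ i $ j = A$i$1 * B$1$j + A$i$2 * B$2$j + A$i$3 * B$3$j"
  by (simp add: matrix_mult_entry sum_3)


section \<open>Schur complements\<close>

lemma schur_elim_right:
  fixes x1 :: "'a::ring_1"
  assumes "x1*y1 + x2*y2 + x3*y3 = \<delta>" and "x11*y1 + x12*y2 + x13*y3 = 0" and "is_unit x11"
  shows "(x2 - x1*uinv x11*x12)*y2 + (x3 - x1*uinv x11*x13)*y3 = \<delta>"
proof -
  have a: "x2*y2 + x3*y3 = \<delta> - x1*y1" using assms(1) by (simp add: algebra_simps eq_diff_eq)
  have b: "x12*y2 + x13*y3 = - (x11*y1)"
    using assms(2) by (simp add: algebra_simps eq_neg_iff_add_eq_0)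
  have "(x2 - x1*uinv x11*x12)*y2 + (x3 - x1*uinv x11*x13)*y3
      = (x2*y2 + x3*y3) - x1*uinv x11*(x12*y2 + x13*y3)"
    by (simp add: algebra_simps)
  also have "\<dots> = \<delta> - x1*y1 + x1*(uinv x11*x11)*y1" unfolding a b by (simp add: algebra_simps)
  finally show ?thesis by (simp add: unit_mult_uinv[OF assms(3)])
qed

lemma schur_elim_left:
  fixes x1 :: "'a::ring_1"
  assumes "y1*x1k + y2*x2k + y3*x3k = \<delta>" and "y1*x11 + y2*x21 + y3*x31 = 0" and "is_unit x11"
  shows "y2*(x2k - x21*uinv x11*x1k) + y3*(x3k - x31*uinv x11*x1k) = \<delta>"
proof -
  have a: "y2*x2k + y3*x3k = \<delta> - y1*x1k" using assms(1) by (simp add: algebra_simps eq_diff_eq)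
  have b: "y2*x21 + y3*x31 = - (y1*x11)"
    using assms(2) by (simp add: algebra_simps eq_neg_iff_add_eq_0)
  have "y2*(x2k - x21*uinv x11*x1k) + y3*(x3k - x31*uinv x11*x1k)
      = (y2*x2k + y3*x3k) - (y2*x21 + y3*x31)*uinv x11*x1k"
    by (simp add: algebra_simps)
  also have "\<dots> = \<delta> - y1*x1k + y1*(x11*uinv x11)*x1k" unfolding a b by (simp add: algebra_simps)
  finally show ?thesis by (simp add: unit_mult_uinv[OF assms(3)])
qed

text \<open>\<open>schur_complement X p q j k\<close> is also the quasideterminant at \<open>(j, k)\<close> of the
  submatrix of \<open>X\<close> with rows \<open>j, p\<close> and columns \<open>k, q\<close>.\<close>

definition schur_complement :: "'a::ring_1 mat3 \<Rightarrow> 3 \<Rightarrow> 3 \<Rightarrow> 3 \<Rightarrow> 3 \<Rightarrow> 'a" where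
  "schur_complement X p q j k = X$j$k - X$j$q * uinv (X$p$q) * X$p$k"

lemma schur_complement_right_inverse:
  fixes X Y :: "'a::ring_1 mat3"
  assumes XY: "X ** Y = mat 1" and u: "is_unit (X$p$q)"
    and d: "q \<noteq> l1" "q \<noteq> l2" "l1 \<noteq> l2" and "k \<noteq> p"
  shows "schur_complement X p q j l1 * Y$l1$k + schur_complement X p q j l2 * Y$l2$k
      = (if j = k then 1 else 0)"
  unfolding schur_complement_def
  by (rule schur_elim_right[OF _ _ u])
    (use matrix_mult_eq_mat_1_expand[OF XY d, of j k] matrix_mult_eq_mat_1_expand[OF XY d, of p k]
       \<open>k \<noteq> p\<close> in simp_all)

lemma schur_complement_left_inverse:
  fixes X Y :: "'a::ring_1 mat3"
  assumes YX: "Y ** X = mat 1" and u: "is_unit (X$p$q)"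
    and d: "p \<noteq> l1" "p \<noteq> l2" "l1 \<noteq> l2" and "j \<noteq> q"
  shows "Y$j$l1 * schur_complement X p q l1 k + Y$j$l2 * schur_complement X p q l2 k
      = (if j = k then 1 else 0)"
  unfolding schur_complement_def
  by (rule schur_elim_left[OF _ _ u])
    (use matrix_mult_eq_mat_1_expand[OF YX d, of j k] matrix_mult_eq_mat_1_expand[OF YX d, of j q]
       \<open>j \<noteq> q\<close> in simp_all)

lemma inverse2_schur_complement:
  fixes X Y :: "'a::ring_1 mat3"
  assumes XY: "X ** Y = mat 1" and YX: "Y ** X = mat 1" and u: "is_unit (X$p$q)"
    and dp: "p \<noteq> p1" "p \<noteq> p2" "p1 \<noteq> p2" and dq: "q \<noteq> q1" "q \<noteq> q2" "q1 \<noteq> q2"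
  shows "inverse2
    (schur_complement X p q p1 q1) (schur_complement X p q p1 q2)
    (schur_complement X p q p2 q1) (schur_complement X p q p2 q2)
    (Y$q1$p1) (Y$q1$p2) (Y$q2$p1) (Y$q2$p2)"
  unfolding inverse2_def
  using schur_complement_right_inverse[OF XY u dq] schur_complement_left_inverse[OF YX u dp] dp dq
  by (simp add: eq_commute[of p1] eq_commute[of q1])

text \<open>The duality of quasideterminants of mutually inverse matrices (Gelfand--Retakh).\<close>

lemma schur_complement_dual_right:
  fixes M N :: "'a::ring_1 mat3"
  assumes NM: "N ** M = mat 1"
    and d: "a \<noteq> b" "a \<noteq> c" "b \<noteq> c" "d \<noteq> e" "d \<noteq> f" "e \<noteq> f"
    and u: "is_unit (N$e$b)" "is_unit (M$c$f)"
  shows "schur_complement N e b d a * schur_complement M c f a d = 1"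
proof -
  let ?s = "schur_complement N e b d a" and ?t = "schur_complement N e b d c"
  have dba: "b \<noteq> a" "b \<noteq> c" "a \<noteq> c" using d by auto
  have 1: "?s * M$a$d + ?t * M$c$d = 1"
    using schur_complement_right_inverse[OF NM u(1) dba, of d d] d by simp
  have 0: "?s * M$a$f + ?t * M$c$f = 0"
    using schur_complement_right_inverse[OF NM u(1) dba, of f d] d by simp
  have "?t = - (?s * M$a$f) * uinv (M$c$f)"
    using 0 by (simp add: unit_mult_uinv_cancel u(2) flip: eq_neg_iff_add_eq_0 add.commute)
  with 1 show ?thesis
    unfolding schur_complement_def[of M] by (simp add: algebra_simps)
qed

lemma schur_complement_dual:
  fixes M N :: "'a::ring_1 mat3"
  assumes MN: "M ** N = mat 1" and NM: "N ** M = mat 1"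
    and d: "a \<noteq> b" "a \<noteq> c" "b \<noteq> c" "d \<noteq> e" "d \<noteq> f" "e \<noteq> f"
    and u: "is_unit (N$e$b)" "is_unit (M$c$f)"
  shows "is_unit (schur_complement M c f a d)"
    and "uinv (schur_complement M c f a d) = schur_complement N e b d a"
proof -
  have "schur_complement N e b d a * schur_complement M c f a d = 1"
    by (rule schur_complement_dual_right[OF NM d u])
  moreover have "schur_complement M c f a d * schur_complement N e b d a = 1"
    by (rule schur_complement_dual_right[OF MN]) (use d u in auto)
  ultimately show "is_unit (schur_complement M c f a d)"
    and "uinv (schur_complement M c f a d) = schur_complement N e b d a"
    using is_unitI uinv_unique by blast+
qed

lemma invertible_iff_invertible2_schur_complement:
  fixes X :: "'a::ring_1 mat3"
  assumes u: "is_unit (X$1$1)"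
  defines "s \<equiv> schur_complement X 1 1"
  shows "invertible X \<longleftrightarrow> invertible2 (s 2 2) (s 2 3) (s 3 2) (s 3 3)"
proof
  assume "invertible X"
  then obtain Y where "X ** Y = mat 1" "Y ** X = mat 1" unfolding invertible_def by blast
  from inverse2_schur_complement[OF this u, of 2 3 2 3]
  show "invertible2 (s 2 2) (s 2 3) (s 3 2) (s 3 3)"
    unfolding invertible2_def s_def by auto
next
  assume "invertible2 (s 2 2) (s 2 3) (s 3 2) (s 3 3)"
  then obtain z22 z23 z32 z33 where z: "inverse2 (s 2 2) (s 2 3) (s 3 2) (s 3 3) z22 z23 z32 z33"
    unfolding invertible2_def by blast
  define t where "t = uinv (X$1$1)"
  note tt = unit_mult_uinv[OF u, folded t_def] and tc = unit_mult_uinv_cancel[OF u, folded t_def]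
  \<comment> \<open>\<open>X = L B U\<close> with \<open>L\<close>, \<open>U\<close> unitriangular and \<open>B\<close> block diagonal\<close>
  define L where "L = mat3_of 1 0 0 (X$2$1*t) 1 0 (X$3$1*t) 0 (1::'a)"
  define L' where "L' = mat3_of 1 0 0 (-(X$2$1*t)) 1 0 (-(X$3$1*t)) 0 (1::'a)"
  define U where "U = mat3_of 1 (t*X$1$2) (t*X$1$3) 0 1 0 0 0 (1::'a)"
  define U' where "U' = mat3_of 1 (-(t*X$1$2)) (-(t*X$1$3)) 0 1 0 0 0 (1::'a)"
  define B where "B = mat3_of (X$1$1) 0 0 0 (s 2 2) (s 2 3) 0 (s 3 2) (s 3 3)"
  define B' where "B' = mat3_of t 0 0 0 z22 z23 0 z32 z33"
  have "invertible L"
    by (rule invertibleI[of _ L'], (rule mat3_eqI; simp add: L_def L'_def matrix_mult_3 mat_1_entry)+)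
  moreover have "invertible U"
    by (rule invertibleI[of _ U'], (rule mat3_eqI; simp add: U_def U'_def matrix_mult_3 mat_1_entry)+)
  moreover have "invertible B"
    by (rule invertibleI[of _ B'], (rule mat3_eqI;
          simp add: B_def B'_def matrix_mult_3 mat_1_entry tt z[unfolded inverse2_def])+)
  ultimately have "invertible (L ** B ** U)" by (simp add: invertible_mult)
  moreover have "L ** B ** U = X"
    by (rule mat3_eqI; simp add: L_def B_def U_def s_def matrix_mult_3 schur_complement_def
          algebra_simps tt tc flip: t_def)
  ultimately show "invertible X" by simp
qed


definition J2_mat :: "'a::ring_1 mat3 \<Rightarrow> 'a mat3" where
  "J2_mat M = (\<chi> j k. uinv (M $ k $ j))"

lemma J2_mat_entry [simp]: "J2_mat M $ j $ k = uinv (M $ k $ j)"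
  by (simp add: J2_mat_def)

lemma J2_eq: "J2 M = (if units_mat M then Some (J2_mat M) else None)"
  unfolding J2_def J2_mat_def by simp

lemma units_mat_J2_mat: "units_mat (M::'a::ring_1 mat3) \<Longrightarrow> units_mat (J2_mat M)"
  unfolding units_mat_def by (simp add: is_unit_uinv)

lemma J2_mat_J2_mat: "units_mat (M::'a::ring_1 mat3) \<Longrightarrow> J2_mat (J2_mat M) = M"
  unfolding units_mat_def by (simp add: vec_eq_iff uinv_uinv)

lemma schur_complement_J2_mat:
  fixes M :: "'a::ring_1 mat3"
  assumes "units_mat M"
  shows "schur_complement (J2_mat M) 1 1 j k
    = (- uinv (M$1$j)) * schur_complement M k j 1 1 * uinv (M$k$1)"
proof -
  have u: "is_unit (M$1$j)" "is_unit (M$k$1)" "is_unit (M$1$1)" "is_unit (M$k$j)"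
    using assms unfolding units_mat_def by auto
  show ?thesis
    unfolding schur_complement_def J2_mat_entry uinv_uinv[OF u(3)]
    by (simp add: algebra_simps unit_mult_uinv_cancel u unit_mult_uinv)
qed

lemma invertible_J2_mat_iff:
  fixes M :: "'a::ring_1 mat3"
  assumes uM: "units_mat M"
  defines "g \<equiv> \<lambda>j k. schur_complement M j k 1 1"
  shows "invertible (J2_mat M) \<longleftrightarrow> invertible2 (g 2 2) (g 3 2) (g 2 3) (g 3 3)"
proof -
  have u: "\<And>j k. is_unit (M$j$k)" using uM unfolding units_mat_def by auto
  have "invertible (J2_mat M) \<longleftrightarrow> invertible2
      (schur_complement (J2_mat M) 1 1 2 2) (schur_complement (J2_mat M) 1 1 2 3)
      (schur_complement (J2_mat M) 1 1 3 2) (schur_complement (J2_mat M) 1 1 3 3)"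
    by (rule invertible_iff_invertible2_schur_complement) (simp add: is_unit_uinv u)
  also have "\<dots> \<longleftrightarrow> invertible2 (g 2 2) (g 3 2) (g 2 3) (g 3 3)"
    unfolding schur_complement_J2_mat[OF uM] g_def
    by (rule invertible2_scale_iff) (simp_all add: is_unit_minus_iff is_unit_uinv u)
  finally show ?thesis .
qed

text \<open>The quasideterminants of \<open>M\<close> governing the invertibility of \<open>J\<^sub>2(M)\<close> are, by duality,
  the inverses of those of \<open>M\<^sup>-\<^sup>1\<close> governing that of \<open>J\<^sub>2(M\<^sup>-\<^sup>1)\<close>, arranged in reverse order.\<close>

lemma invertible_J2_mat_inverse_iff:
  fixes M N :: "'a::ring_1 mat3"
  assumes MN: "M ** N = mat 1" and NM: "N ** M = mat 1"
    and uM: "units_mat M" and uN: "units_mat N"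
  shows "invertible (J2_mat N) \<longleftrightarrow> invertible (J2_mat M)"
proof -
  let ?g = "\<lambda>j k. schur_complement M j k 1 1" and ?h = "\<lambda>j k. schur_complement N j k 1 1"
  have u: "\<And>j k. is_unit (M$j$k)" "\<And>j k. is_unit (N$j$k)"
    using uM uN unfolding units_mat_def by auto
  note dual = schur_complement_dual[OF MN NM _ _ _ _ _ _ u(2) u(1), of 1 _ _ 1]
  have "is_unit (?g 2 2)" "is_unit (?g 3 2)" "is_unit (?g 2 3)" "is_unit (?g 3 3)"
    "uinv (?g 2 2) = ?h 3 3" "uinv (?g 3 2) = ?h 3 2" "uinv (?g 2 3) = ?h 2 3" "uinv (?g 3 3) = ?h 2 2"
    using dual(1)[of 3 2 3 2] dual(1)[of 2 3 3 2] dual(1)[of 3 2 2 3] dual(1)[of 2 3 2 3]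
      dual(2)[of 3 2 3 2] dual(2)[of 2 3 3 2] dual(2)[of 3 2 2 3] dual(2)[of 2 3 2 3]
    by simp_all
  then have "invertible2 (?h 2 2) (?h 3 2) (?h 2 3) (?h 3 3)
      \<longleftrightarrow> invertible2 (uinv (?g 3 3)) (uinv (?g 3 2)) (uinv (?g 2 3)) (uinv (?g 2 2))"
    by simp
  also have "\<dots> \<longleftrightarrow> invertible2 (uinv (?g 2 2)) (uinv (?g 2 3)) (uinv (?g 3 2)) (uinv (?g 3 3))"
    by (rule invertible2_rotate_iff)
  also have "\<dots> \<longleftrightarrow> invertible2 (?g 2 2) (?g 3 2) (?g 2 3) (?g 3 3)"
    by (rule invertible2_uinv_iff) fact+
  finally show ?thesis unfolding invertible_J2_mat_iff[OF uM] invertible_J2_mat_iff[OF uN] .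
qed


section \<open>Complementary minors\<close>

text \<open>The inverse of \<open>w0\<close> is the Schur complement \<open>m0 - (m1 m2) (a b; c d)\<^sup>-\<^sup>1 (B1 B2)\<^sup>T\<close>.\<close>

lemma is_unit_by_block_schur_complement:
  fixes a :: "'a::ring_1"
  assumes inv: "inverse2 a b c d x y z w"
    and r1: "B1 * w0 + a * q1 + b * q2 = 0" and r2: "B2 * w0 + c * q1 + d * q2 = 0"
    and r0: "m0 * w0 + m1 * q1 + m2 * q2 = 1"
    and c1: "w0 * m1 + h1 * a + h2 * c = 0" and c2: "w0 * m2 + h1 * b + h2 * d = 0"
    and c0: "w0 * m0 + h1 * B1 + h2 * B2 = 1"
  shows "is_unit w0"
proof -
  note z = inv[unfolded inverse2_def]
  have r1': "a * q1 + b * q2 = - (B1 * w0)" and r2': "c * q1 + d * q2 = - (B2 * w0)"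
    using r1 r2 by (simp_all add: algebra_simps eq_neg_iff_add_eq_0)
  have c1': "h1 * a + h2 * c = - (w0 * m1)" and c2': "h1 * b + h2 * d = - (w0 * m2)"
    using c1 c2 by (simp_all add: algebra_simps eq_neg_iff_add_eq_0)
  have q1: "q1 = - ((x * B1 + y * B2) * w0)"
  proof -
    have "q1 = (x * a + y * c) * q1 + (x * b + y * d) * q2" using z by simp
    also have "\<dots> = x * (a * q1 + b * q2) + y * (c * q1 + d * q2)" by (simp add: algebra_simps)
    finally show ?thesis unfolding r1' r2' by (simp add: algebra_simps)
  qed
  have q2: "q2 = - ((z * B1 + w * B2) * w0)"
  proof -
    have "q2 = (z * a + w * c) * q1 + (z * b + w * d) * q2" using z by simp
    also have "\<dots> = z * (a * q1 + b * q2) + w * (c * q1 + d * q2)" by (simp add: algebra_simps)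
    finally show ?thesis unfolding r1' r2' by (simp add: algebra_simps)
  qed
  have h1: "h1 = - (w0 * (m1 * x + m2 * z))"
  proof -
    have "h1 = h1 * (a * x + b * z) + h2 * (c * x + d * z)" using z by simp
    also have "\<dots> = (h1 * a + h2 * c) * x + (h1 * b + h2 * d) * z" by (simp add: algebra_simps)
    finally show ?thesis unfolding c1' c2' by (simp add: algebra_simps)
  qed
  have h2: "h2 = - (w0 * (m1 * y + m2 * w))"
  proof -
    have "h2 = h1 * (a * y + b * w) + h2 * (c * y + d * w)" using z by simp
    also have "\<dots> = (h1 * a + h2 * c) * y + (h1 * b + h2 * d) * w" by (simp add: algebra_simps)
    finally show ?thesis unfolding c1' c2' by (simp add: algebra_simps)
  qed
  define s where "s = m0 - m1 * (x * B1 + y * B2) - m2 * (z * B1 + w * B2)"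
  have "s * w0 = m0 * w0 + m1 * q1 + m2 * q2" unfolding s_def q1 q2 by (simp add: algebra_simps)
  moreover have "w0 * s = w0 * m0 + h1 * B1 + h2 * B2" unfolding s_def h1 h2 by (simp add: algebra_simps)
  ultimately show ?thesis using r0 c0 is_unitI by metis
qed

lemma invertible2_minor_iff_is_unit_inverse_entry:
  fixes M N :: "'a::ring_1 mat3"
  assumes MN: "M ** N = mat 1" and NM: "N ** M = mat 1"
    and di: "i0 \<noteq> i1" "i0 \<noteq> i2" "i1 \<noteq> i2" and dk: "k0 \<noteq> k1" "k0 \<noteq> k2" "k1 \<noteq> k2"
  shows "invertible2 (M$i1$k1) (M$i1$k2) (M$i2$k1) (M$i2$k2) \<longleftrightarrow> is_unit (N$k0$i0)"
proof
  note E = matrix_mult_eq_mat_1_expand[OF MN dk] and F = matrix_mult_eq_mat_1_expand[OF NM di]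
  assume "invertible2 (M$i1$k1) (M$i1$k2) (M$i2$k1) (M$i2$k2)"
  then obtain x y z w where "inverse2 (M$i1$k1) (M$i1$k2) (M$i2$k1) (M$i2$k2) x y z w"
    unfolding invertible2_def by blast
  then show "is_unit (N$k0$i0)"
    by (rule is_unit_by_block_schur_complement)
      (use E[of i1 i0] E[of i2 i0] E[of i0 i0] F[of k0 k1] F[of k0 k2] F[of k0 k0] di dk in simp_all)
next
  assume "is_unit (N$k0$i0)"
  from inverse2_schur_complement[OF NM MN this dk di]
  show "invertible2 (M$i1$k1) (M$i1$k2) (M$i2$k1) (M$i2$k2)"
    unfolding invertible2_def by (blast dest: inverse2_sym)
qed

definition minors2_invertible :: "'a::ring_1 mat3 \<Rightarrow> bool" where
  "minors2_invertible X \<longleftrightarrow>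
     (\<forall>i1 i2 k1 k2. i1 \<noteq> i2 \<and> k1 \<noteq> k2 \<longrightarrow> invertible2 (X$i1$k1) (X$i1$k2) (X$i2$k1) (X$i2$k2))"

lemma exists_index_neq2: "\<exists>c::3. c \<noteq> a \<and> c \<noteq> b"
proof -
  have "card {a, b} \<le> 2" by (cases "a = b") simp_all
  then have "card {a, b} < card (UNIV::3 set)" by simp
  then have "{a, b} \<noteq> UNIV" by auto
  then show ?thesis by blast
qed

lemma exists_index_pair_neq: "\<exists>b c::3. a \<noteq> b \<and> a \<noteq> c \<and> b \<noteq> c"
proof -
  consider "a = 1" | "a = 2" | "a = 3" using exhaust_3 by blast
  then show ?thesis
  proof cases
    case 1 then show ?thesis by (intro exI[of _ 2] exI[of _ 3]) simp
  next
    case 2 then show ?thesis by (intro exI[of _ 1] exI[of _ 3]) simp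
  next
    case 3 then show ?thesis by (intro exI[of _ 1] exI[of _ 2]) simp
  qed
qed

lemma units_mat_inverse_iff_minors2_invertible:
  fixes X Y :: "'a::ring_1 mat3"
  assumes XY: "X ** Y = mat 1" and YX: "Y ** X = mat 1"
  shows "units_mat Y \<longleftrightarrow> minors2_invertible X"
proof
  assume u: "units_mat Y"
  show "minors2_invertible X" unfolding minors2_invertible_def
  proof (intro allI impI, elim conjE)
    fix i1 i2 k1 k2 :: 3 assume d: "i1 \<noteq> i2" "k1 \<noteq> k2"
    obtain i0 where "i0 \<noteq> i1" "i0 \<noteq> i2" using exists_index_neq2 by blast
    moreover obtain k0 where "k0 \<noteq> k1" "k0 \<noteq> k2" using exists_index_neq2 by blast
    moreover have "is_unit (Y$k0$i0)" using u unfolding units_mat_def by blast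
    ultimately show "invertible2 (X$i1$k1) (X$i1$k2) (X$i2$k1) (X$i2$k2)"
      using invertible2_minor_iff_is_unit_inverse_entry[OF XY YX] d by blast
  qed
next
  assume m: "minors2_invertible X"
  show "units_mat Y" unfolding units_mat_def
  proof (intro allI)
    fix k0 i0 :: 3
    obtain i1 i2 where i: "i0 \<noteq> i1" "i0 \<noteq> i2" "i1 \<noteq> i2" using exists_index_pair_neq by blast
    obtain k1 k2 where k: "k0 \<noteq> k1" "k0 \<noteq> k2" "k1 \<noteq> k2" using exists_index_pair_neq by blast
    have "invertible2 (X$i1$k1) (X$i1$k2) (X$i2$k1) (X$i2$k2)"
      using m i k unfolding minors2_invertible_def by blast
    then show "is_unit (Y$k0$i0)"
      using invertible2_minor_iff_is_unit_inverse_entry[OF XY YX i k] by simp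
  qed
qed

lemma minors2_invertible_J2_mat:
  fixes M :: "'a::ring_1 mat3"
  assumes "units_mat M"
  shows "minors2_invertible (J2_mat M) \<longleftrightarrow> minors2_invertible M"
proof -
  have "\<And>j k. is_unit (M$j$k)" using assms unfolding units_mat_def by auto
  then have "invertible2 (J2_mat M$i1$k1) (J2_mat M$i1$k2) (J2_mat M$i2$k1) (J2_mat M$i2$k2)
      \<longleftrightarrow> invertible2 (M$k1$i1) (M$k1$i2) (M$k2$i1) (M$k2$i2)" for i1 i2 k1 k2
    by (simp add: invertible2_uinv_iff)
  then show ?thesis unfolding minors2_invertible_def by (auto simp del: J2_mat_entry)
qed

lemma units_mat_inverse_J2_mat_iff:
  fixes M N :: "'a::ring_1 mat3"
  assumes MN: "M ** N = mat 1" and NM: "N ** M = mat 1"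
    and uN: "units_mat N" and iJ: "invertible (J2_mat N)"
  shows "units_mat (matrix_inv (J2_mat N)) \<longleftrightarrow> units_mat M"
proof -
  have "units_mat (matrix_inv (J2_mat N)) \<longleftrightarrow> minors2_invertible (J2_mat N)"
    by (rule units_mat_inverse_iff_minors2_invertible[OF matrix_inv_right[OF iJ] matrix_inv_left[OF iJ]])
  also have "\<dots> \<longleftrightarrow> minors2_invertible N" by (rule minors2_invertible_J2_mat[OF uN])
  also have "\<dots> \<longleftrightarrow> units_mat M" by (rule units_mat_inverse_iff_minors2_invertible[OF NM MN, symmetric])
  finally show ?thesis .
qed


lemma sub_invertible_singleton: "sub_invertible (M::'a::ring_1 mat3) {i} {k} \<longleftrightarrow> is_unit (M$i$k)"
proof
  assume "sub_invertible M {i} {k}"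
  then obtain N where "M$i$k * N k i = 1" "N k i * M$i$k = 1" unfolding sub_invertible_def by auto
  then show "is_unit (M$i$k)" by (rule is_unitI)
next
  assume "is_unit (M$i$k)"
  then show "sub_invertible M {i} {k}" unfolding sub_invertible_def
    by (intro exI[of _ "\<lambda>_ _. uinv (M$i$k)"]) (simp add: unit_mult_uinv)
qed

lemma sub_invertible_pair:
  fixes M :: "'a::ring_1 mat3"
  assumes d: "i1 \<noteq> i2" "k1 \<noteq> k2"
  shows "sub_invertible M {i1, i2} {k1, k2} \<longleftrightarrow> invertible2 (M$i1$k1) (M$i1$k2) (M$i2$k1) (M$i2$k2)"
proof
  assume "sub_invertible M {i1, i2} {k1, k2}"
  then obtain N where
      "\<forall>i\<in>{i1, i2}. \<forall>i'\<in>{i1, i2}. (\<Sum>k\<in>{k1, k2}. M$i$k * N k i') = (if i = i' then 1 else 0)"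
      "\<forall>k\<in>{k1, k2}. \<forall>k'\<in>{k1, k2}. (\<Sum>i\<in>{i1, i2}. N k i * M$i$k') = (if k = k' then 1 else 0)"
    unfolding sub_invertible_def by blast
  with d have "inverse2 (M$i1$k1) (M$i1$k2) (M$i2$k1) (M$i2$k2) (N k1 i1) (N k1 i2) (N k2 i1) (N k2 i2)"
    unfolding inverse2_def by simp
  then show "invertible2 (M$i1$k1) (M$i1$k2) (M$i2$k1) (M$i2$k2)" unfolding invertible2_def by blast
next
  assume "invertible2 (M$i1$k1) (M$i1$k2) (M$i2$k1) (M$i2$k2)"
  then obtain x y z w where inv: "inverse2 (M$i1$k1) (M$i1$k2) (M$i2$k1) (M$i2$k2) x y z w"
    unfolding invertible2_def by blast
  define N where "N k i = (if k = k1 then (if i = i1 then x else y) else (if i = i1 then z else w))"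
    for k i
  have "(\<Sum>k\<in>{k1, k2}. M$i$k * N k i') = (if i = i' then 1 else 0)"
    if "i \<in> {i1, i2}" "i' \<in> {i1, i2}" for i i'
    using that d inv unfolding inverse2_def N_def by auto
  moreover have "(\<Sum>i\<in>{i1, i2}. N k i * M$i$k') = (if k = k' then 1 else 0)"
    if "k \<in> {k1, k2}" "k' \<in> {k1, k2}" for k k'
    using that d inv unfolding inverse2_def N_def by auto
  ultimately show "sub_invertible M {i1, i2} {k1, k2}" unfolding sub_invertible_def by blast
qed

lemma sub_invertible_UNIV: "sub_invertible (M::'a::ring_1 mat3) UNIV UNIV \<longleftrightarrow> invertible M"
proof
  assume "sub_invertible M UNIV UNIV"
  then obtain N where
      "\<And>i i'. (\<Sum>k\<in>UNIV. M$i$k * N k i') = (if i = i' then 1 else 0)"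
      "\<And>k k'. (\<Sum>i\<in>UNIV. N k i * M$i$k') = (if k = k' then 1 else 0)"
    unfolding sub_invertible_def by blast
  then show "invertible M"
    by (intro invertibleI[of _ "\<chi> k i. N k i"]) (simp_all add: vec_eq_iff matrix_mult_entry mat_1_entry)
next
  assume "invertible M"
  then obtain Y where "M ** Y = mat 1" "Y ** M = mat 1" unfolding invertible_def by blast
  then show "sub_invertible M UNIV UNIV" unfolding sub_invertible_def
    by (intro exI[of _ "\<lambda>k i. Y$k$i"]) (simp add: vec_eq_iff matrix_mult_entry mat_1_entry)
qed

lemma nonempty_index_set_cases:
  fixes I :: "3 set"
  assumes "I \<noteq> {}"
  obtains i where "I = {i}" | i j where "i \<noteq> j" "I = {i, j}" | "I = UNIV"
proof -
  have "card I \<le> 3" using card_mono[of UNIV I] by simp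
  moreover have "card I \<noteq> 0" using assms by simp
  ultimately consider "card I = 1" | "card I = 2" | "card I = 3" by linarith
  then show ?thesis
  proof cases
    case 1 then show ?thesis using that(1) by (auto simp: card_1_singleton_iff)
  next
    case 2 then show ?thesis using that(2) by (auto simp: card_2_iff)
  next
    case 3 then show ?thesis using that(3) card_subset_eq[of UNIV I] by simp
  qed
qed

lemma all_sub_invertible_iff:
  fixes M :: "'a::ring_1 mat3"
  shows "(\<forall>I K. I \<noteq> {} \<and> card I = card K \<longrightarrow> sub_invertible M I K) \<longleftrightarrow>
         invertible M \<and> units_mat M \<and> units_mat (matrix_inv M)" (is "?L \<longleftrightarrow> ?R")
proof
  assume L: ?L
  have inv: "invertible M" using L[rule_format, of UNIV UNIV] sub_invertible_UNIV by auto
  have "units_mat M"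
    unfolding units_mat_def using L[rule_format, of "{_}" "{_}"] by (simp add: sub_invertible_singleton)
  moreover have "minors2_invertible M" unfolding minors2_invertible_def
  proof (intro allI impI, elim conjE)
    fix i1 i2 k1 k2 :: 3 assume "i1 \<noteq> i2" "k1 \<noteq> k2"
    with L[rule_format, of "{i1, i2}" "{k1, k2}"]
    show "invertible2 (M$i1$k1) (M$i1$k2) (M$i2$k1) (M$i2$k2)" by (simp add: sub_invertible_pair)
  qed
  ultimately show ?R
    using inv units_mat_inverse_iff_minors2_invertible[OF matrix_inv_right[OF inv] matrix_inv_left[OF inv]]
    by simp
next
  assume R: ?R
  then have inv: "invertible M" and un: "units_mat M" and m: "minors2_invertible M"
    using units_mat_inverse_iff_minors2_invertible[OF matrix_inv_right matrix_inv_left] by auto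
  show ?L
  proof (intro allI impI, elim conjE)
    fix I K :: "3 set" assume "I \<noteq> {}" and c: "card I = card K"
    then show "sub_invertible M I K"
    proof (cases rule: nonempty_index_set_cases)
      case (1 i)
      then have "card K = 1" using c by simp
      then obtain k where "K = {k}" by (auto simp: card_1_singleton_iff)
      with 1 un show ?thesis unfolding units_mat_def by (simp add: sub_invertible_singleton)
    next
      case (2 i j)
      then have "card K = 2" using c by simp
      then obtain k l where "k \<noteq> l" "K = {k, l}" by (auto simp: card_2_iff)
      with 2 m show ?thesis unfolding minors2_invertible_def by (simp add: sub_invertible_pair)
    next
      case 3
      then have "K = UNIV" using c card_subset_eq[of UNIV K] by simp
      with 3 inv show ?thesis by (simp add: sub_invertible_UNIV)
    qed
  qed
qed

lemma S_set_iff: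
  fixes M :: "'a::ring_1 mat3"
  shows "M \<in> S_set \<longleftrightarrow>
    invertible M \<and> units_mat M \<and> units_mat (matrix_inv M) \<and> invertible (J2_mat M)"
  unfolding S_set_def all_sub_invertible_iff[simplified] by (auto simp: J2_eq)


section \<open>Iterates of partial maps\<close>

lemma dom_mpow_Suc_subset: "dom (mpow f (Suc k)) \<subseteq> dom (mpow f k)"
  by (auto simp: map_comp_def dom_def split: option.splits)

lemma dom_mpow_antimono: "k \<le> m \<Longrightarrow> dom (mpow f m) \<subseteq> dom (mpow f k)"
proof (induction m)
  case 0 then show ?case by simp
next
  case (Suc m)
  then show ?case using dom_mpow_Suc_subset[of f m] by (cases "k = Suc m") auto
qed

lemma dom_mpow_2: "x \<in> dom (mpow f 2) \<longleftrightarrow> x \<in> dom f \<and> the (f x) \<in> dom f"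
  by (auto simp: numeral_2_eq_2 map_comp_def dom_def split: option.splits)

lemma mpow_closed:
  assumes "\<And>x. x \<in> A \<Longrightarrow> \<exists>y\<in>A. f x = Some y" and "x \<in> A"
  shows "\<exists>y\<in>A. mpow f k x = Some y"
proof (induction k)
  case 0 then show ?case using assms(2) by simp
next
  case (Suc k)
  then obtain y where "y \<in> A" "mpow f k x = Some y" by blast
  then show ?case using assms(1)[of y] by (auto simp: map_comp_def)
qed

lemma dom_mpow_eq:
  assumes closed: "\<And>x. x \<in> A \<Longrightarrow> \<exists>y\<in>A. f x = Some y"
    and twice: "\<And>x. x \<in> dom f \<Longrightarrow> the (f x) \<in> dom f \<Longrightarrow> x \<in> A"
    and "k \<ge> 2"
  shows "dom (mpow f k) = A"
proof
  show "dom (mpow f k) \<subseteq> A"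
  proof
    fix x assume "x \<in> dom (mpow f k)"
    then have "x \<in> dom (mpow f 2)" using dom_mpow_antimono[OF \<open>k \<ge> 2\<close>, of f] by blast
    then show "x \<in> A" using twice by (simp add: dom_mpow_2)
  qed
  show "A \<subseteq> dom (mpow f k)"
    using mpow_closed[of A f, OF closed] by blast
qed

lemma bij_betw_the_partial_inverse:
  assumes "\<And>x. x \<in> A \<Longrightarrow> \<exists>y\<in>A. f x = Some y \<and> g y = Some x"
    and "\<And>y. y \<in> A \<Longrightarrow> \<exists>x\<in>A. g y = Some x \<and> f x = Some y"
  shows "bij_betw (\<lambda>x. the (f x)) A A"
  by (rule bij_betw_byWitness[where f' = "\<lambda>y. the (g y)"]) (use assms in fastforce)+


lemma J_eq:
  "J M = (if invertible M \<and> units_mat (matrix_inv M) then Some (J2_mat (matrix_inv M)) else None)"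
  unfolding J_def map_comp_def J1_def J2_eq by simp

lemma Jinv_eq:
  "Jinv M = (if units_mat M \<and> invertible (J2_mat M) then Some (matrix_inv (J2_mat M)) else None)"
  unfolding Jinv_def map_comp_def J1_def J2_eq by simp

lemma dom_J_iff: "M \<in> dom J \<longleftrightarrow> invertible M \<and> units_mat (matrix_inv M)"
  unfolding dom_def J_eq by simp

lemma S_set_eq_dom_J_Jinv: "(S_set :: 'a::ring_1 mat3 set) = dom J \<inter> dom Jinv"
  by (rule set_eqI) (simp add: S_set_iff dom_def J_eq Jinv_eq)

lemma J_S_set:
  fixes M :: "'a::ring_1 mat3"
  assumes "M \<in> S_set"
  shows "J M = Some (J2_mat (matrix_inv M))" and "J2_mat (matrix_inv M) \<in> S_set"
    and "Jinv (J2_mat (matrix_inv M)) = Some M"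
proof -
  let ?N = "matrix_inv M" and ?P = "J2_mat (matrix_inv M)"
  have inv: "invertible M" and uM: "units_mat M" and uN: "units_mat ?N"
    and iJ: "invertible (J2_mat M)"
    using assms S_set_iff by auto
  note MN = matrix_inv_right[OF inv] matrix_inv_left[OF inv]
  show "J M = Some ?P" unfolding J_eq using inv uN by simp
  have iP: "invertible ?P" using invertible_J2_mat_inverse_iff[OF MN uM uN] iJ by simp
  have uP: "units_mat ?P" by (rule units_mat_J2_mat[OF uN])
  have "units_mat (matrix_inv ?P)" using units_mat_inverse_J2_mat_iff[OF MN uN iP] uM by simp
  moreover have PP: "J2_mat ?P = ?N" by (rule J2_mat_J2_mat[OF uN])
  ultimately show "?P \<in> S_set"
    using iP uP invertible_matrix_inv[OF inv] by (simp add: S_set_iff)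
  show "Jinv ?P = Some M"
    unfolding Jinv_eq PP using uP invertible_matrix_inv[OF inv] matrix_inv_matrix_inv[OF inv] by simp
qed

lemma Jinv_S_set:
  fixes M :: "'a::ring_1 mat3"
  assumes "M \<in> S_set"
  shows "Jinv M = Some (matrix_inv (J2_mat M))" and "matrix_inv (J2_mat M) \<in> S_set"
    and "J (matrix_inv (J2_mat M)) = Some M"
proof -
  let ?Q = "J2_mat M" and ?R = "matrix_inv (J2_mat M)"
  have inv: "invertible M" and uM: "units_mat M" and uN: "units_mat (matrix_inv M)"
    and iJ: "invertible ?Q"
    using assms S_set_iff by auto
  note QR = matrix_inv_right[OF iJ] matrix_inv_left[OF iJ]
  show "Jinv M = Some ?R" unfolding Jinv_eq using uM iJ by simp
  have uQ: "units_mat ?Q" by (rule units_mat_J2_mat[OF uM])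
  have uR: "units_mat ?R"
    using units_mat_inverse_J2_mat_iff[OF matrix_inv_left[OF inv] matrix_inv_right[OF inv] uM iJ] uN
    by simp
  have "invertible (J2_mat ?R)"
    using invertible_J2_mat_inverse_iff[OF QR uQ uR] J2_mat_J2_mat[OF uM] inv by simp
  moreover have RR: "matrix_inv ?R = ?Q" by (rule matrix_inv_matrix_inv[OF iJ])
  ultimately show "?R \<in> S_set"
    using invertible_matrix_inv[OF iJ] uR uQ by (simp add: S_set_iff)
  show "J ?R = Some M"
    unfolding J_eq RR J2_mat_J2_mat[OF uM] using invertible_matrix_inv[OF iJ] uQ by simp
qed

lemma S_set_if_J_twice:
  fixes M :: "'a::ring_1 mat3"
  assumes "M \<in> dom J" and "the (J M) \<in> dom J"
  shows "M \<in> S_set"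
proof -
  let ?N = "matrix_inv M"
  have inv: "invertible M" and uN: "units_mat ?N" using assms(1) dom_J_iff by auto
  note MN = matrix_inv_right[OF inv] matrix_inv_left[OF inv]
  have "the (J M) = J2_mat ?N" unfolding J_eq using inv uN by simp
  then have iP: "invertible (J2_mat ?N)" and "units_mat (matrix_inv (J2_mat ?N))"
    using assms(2) dom_J_iff by auto
  then have uM: "units_mat M" using units_mat_inverse_J2_mat_iff[OF MN uN iP] by simp
  then have "invertible (J2_mat M)" using invertible_J2_mat_inverse_iff[OF MN uM uN] iP by simp
  then show ?thesis using S_set_iff inv uM uN by blast
qed


section \<open>Diagonal rescaling\<close>

definition diag_scale :: "(3 \<Rightarrow> 'a::ring_1) \<Rightarrow> 'a mat3 \<Rightarrow> (3 \<Rightarrow> 'a) \<Rightarrow> 'a mat3" where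
  "diag_scale d M e = (\<chi> j k. d j * M$j$k * e k)"

lemma diag_scale_entry [simp]: "diag_scale d M e $ j $ k = d j * M$j$k * e k"
  by (simp add: diag_scale_def)

definition unit_fun :: "(3 \<Rightarrow> 'a::ring_1) \<Rightarrow> bool" where
  "unit_fun d \<longleftrightarrow> (\<forall>j. is_unit (d j))"

lemma unit_fun_uinv: "unit_fun d \<Longrightarrow> unit_fun (\<lambda>j. uinv (d j))"
  unfolding unit_fun_def by (simp add: is_unit_uinv)

lemma uinv_uinv_fun: "unit_fun d \<Longrightarrow> (\<lambda>j. uinv (uinv (d j))) = d"
  unfolding unit_fun_def by (simp add: uinv_uinv)

lemma units_mat_diag_scale:
  "units_mat M \<Longrightarrow> unit_fun d \<Longrightarrow> unit_fun e \<Longrightarrow> units_mat (diag_scale d M e)"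
  unfolding units_mat_def unit_fun_def by (simp add: is_unit_mult)

lemma J2_mat_diag_scale:
  fixes M :: "'a::ring_1 mat3"
  assumes "units_mat M" "unit_fun d" "unit_fun e"
  shows "J2_mat (diag_scale d M e) = diag_scale (\<lambda>j. uinv (e j)) (J2_mat M) (\<lambda>k. uinv (d k))"
  using assms unfolding units_mat_def unit_fun_def by (simp add: vec_eq_iff uinv_mult is_unit_mult mult.assoc)

lemma diag_scale_mult:
  fixes M N :: "'a::ring_1 mat3"
  assumes "unit_fun e"
  shows "diag_scale d M e ** diag_scale (\<lambda>k. uinv (e k)) N f = diag_scale d (M ** N) f"
proof -
  have u: "\<And>j. is_unit (e j)" using assms unfolding unit_fun_def by auto
  have "(\<Sum>l\<in>UNIV. d i * M$i$l * e l * (uinv (e l) * N$l$k * f k))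
      = d i * (\<Sum>l\<in>UNIV. M$i$l * N$l$k) * f k" for i k
  proof -
    have "(\<Sum>l\<in>UNIV. d i * M$i$l * e l * (uinv (e l) * N$l$k * f k))
        = (\<Sum>l\<in>UNIV. d i * (M$i$l * N$l$k * f k))"
      by (rule sum.cong) (simp_all add: mult.assoc unit_mult_uinv_cancel u)
    then show ?thesis by (simp add: sum_distrib_left sum_distrib_right mult.assoc)
  qed
  then show ?thesis by (simp add: vec_eq_iff matrix_mult_entry)
qed

lemma diag_scale_mat_1:
  fixes d :: "3 \<Rightarrow> 'a::ring_1"
  assumes "unit_fun d"
  shows "diag_scale d (mat 1) (\<lambda>k. uinv (d k)) = mat 1"
  using assms unfolding unit_fun_def by (simp add: vec_eq_iff mat_1_entry unit_mult_uinv)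

lemma diag_scale_diag_scale_uinv:
  fixes M :: "'a::ring_1 mat3"
  assumes "unit_fun d" "unit_fun e"
  shows "diag_scale (\<lambda>j. uinv (d j)) (diag_scale d M e) (\<lambda>k. uinv (e k)) = M"
  using assms unfolding unit_fun_def
  by (simp add: vec_eq_iff mult.assoc unit_mult_uinv_cancel unit_mult_uinv)

lemma
  fixes M :: "'a::ring_1 mat3"
  assumes inv: "invertible M" and d: "unit_fun d" and e: "unit_fun e"
  shows invertible_diag_scale: "invertible (diag_scale d M e)"
    and matrix_inv_diag_scale: "matrix_inv (diag_scale d M e)
      = diag_scale (\<lambda>k. uinv (e k)) (matrix_inv M) (\<lambda>j. uinv (d j))"
proof -
  let ?N = "diag_scale (\<lambda>k. uinv (e k)) (matrix_inv M) (\<lambda>j. uinv (d j))"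
  have "diag_scale d M e ** ?N = mat 1"
    unfolding diag_scale_mult[OF e] matrix_inv_right[OF inv] diag_scale_mat_1[OF d] ..
  moreover have "?N ** diag_scale d M e = mat 1"
    using diag_scale_mult[OF unit_fun_uinv[OF d], of "\<lambda>k. uinv (e k)" "matrix_inv M" M e]
      diag_scale_mat_1[OF unit_fun_uinv[OF e]]
    by (simp add: uinv_uinv_fun d e matrix_inv_left[OF inv])
  ultimately show "invertible (diag_scale d M e)" and "matrix_inv (diag_scale d M e) = ?N"
    using invertibleI matrix_inv_unique by blast+
qed

lemma S_set_diag_scale:
  fixes M :: "'a::ring_1 mat3"
  assumes "M \<in> S_set" and d: "unit_fun d" and e: "unit_fun e"
  shows "diag_scale d M e \<in> S_set"
proof -
  have inv: "invertible M" and uM: "units_mat M" and uN: "units_mat (matrix_inv M)"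
    and iJ: "invertible (J2_mat M)"
    using assms(1) S_set_iff by auto
  show ?thesis unfolding S_set_iff
    using invertible_diag_scale[OF inv d e] matrix_inv_diag_scale[OF inv d e] units_mat_diag_scale[OF uM d e]
      units_mat_diag_scale[OF uN unit_fun_uinv[OF e] unit_fun_uinv[OF d]] J2_mat_diag_scale[OF uM d e]
      invertible_diag_scale[OF iJ unit_fun_uinv[OF e] unit_fun_uinv[OF d]]
    by simp
qed

lemma dom_J_diag_scale:
  fixes M :: "'a::ring_1 mat3"
  assumes "diag_scale d M e \<in> dom J" and d: "unit_fun d" and e: "unit_fun e"
  shows "M \<in> dom J"
proof -
  let ?X = "diag_scale d M e"
  have i: "invertible ?X" and u: "units_mat (matrix_inv ?X)" using assms(1) dom_J_iff by auto
  note d' = unit_fun_uinv[OF d] and e' = unit_fun_uinv[OF e]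
  have M: "M = diag_scale (\<lambda>j. uinv (d j)) ?X (\<lambda>k. uinv (e k))"
    using diag_scale_diag_scale_uinv[OF d e] by simp
  have "invertible M" using invertible_diag_scale[OF i d' e'] M by simp
  moreover have "units_mat (matrix_inv M)"
    using matrix_inv_diag_scale[OF i d' e'] units_mat_diag_scale[OF u unit_fun_uinv[OF e'] unit_fun_uinv[OF d']]
    by (simp flip: M)
  ultimately show ?thesis by (simp add: dom_J_iff)
qed


lemma hat_mat_J2_mat: "hat_mat M \<Longrightarrow> hat_mat (J2_mat M)"
  unfolding hat_mat_def by simp

lemma LambdaL_eq_diag_scale:
  "LambdaL N = diag_scale (\<lambda>j. N$1$1 * uinv (N$j$1)) N (\<lambda>k. uinv (N$1$k))"
  unfolding LambdaL_def by (simp add: vec_eq_iff mult.assoc)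

lemma LambdaR_eq_diag_scale:
  "LambdaR Y = diag_scale (\<lambda>j. uinv (Y$j$1)) Y (\<lambda>k. uinv (Y$1$k) * Y$1$1)"
  unfolding LambdaR_def by (simp add: vec_eq_iff mult.assoc)

lemma unit_fun_LambdaL_factors:
  "units_mat (N::'a::ring_1 mat3) \<Longrightarrow>
    unit_fun (\<lambda>j. N$1$1 * uinv (N$j$1)) \<and> unit_fun (\<lambda>k. uinv (N$1$k))"
  unfolding units_mat_def unit_fun_def by (simp add: is_unit_mult is_unit_uinv)

lemma unit_fun_LambdaR_factors:
  "units_mat (Y::'a::ring_1 mat3) \<Longrightarrow>
    unit_fun (\<lambda>j. uinv (Y$j$1)) \<and> unit_fun (\<lambda>k. uinv (Y$1$k) * Y$1$1)"
  unfolding units_mat_def unit_fun_def by (simp add: is_unit_mult is_unit_uinv)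

lemma hat_mat_LambdaL: "units_mat (N::'a::ring_1 mat3) \<Longrightarrow> hat_mat (LambdaL N)"
  unfolding hat_mat_def LambdaL_def units_mat_def
  by (simp add: mult.assoc unit_mult_uinv_cancel unit_mult_uinv)

lemma hat_mat_LambdaR: "units_mat (Y::'a::ring_1 mat3) \<Longrightarrow> hat_mat (LambdaR Y)"
  unfolding hat_mat_def LambdaR_def units_mat_def
  by (simp add: mult.assoc unit_mult_uinv_cancel unit_mult_uinv)

lemma LambdaL_diag_scale_hat_mat:
  fixes W :: "'a::ring_1 mat3"
  assumes "hat_mat W" "unit_fun p" "unit_fun q"
  shows "LambdaL (diag_scale p W q) = (\<chi> j k. p 1 * W$j$k * uinv (p 1))"
  using assms unfolding hat_mat_def unit_fun_def LambdaL_def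
  by (simp add: vec_eq_iff is_unit_mult uinv_mult mult.assoc unit_mult_uinv_cancel)

lemma LambdaR_diag_scale_hat_mat:
  fixes W :: "'a::ring_1 mat3"
  assumes "hat_mat W" "unit_fun p" "unit_fun q"
  shows "LambdaR (diag_scale p W q) = (\<chi> j k. uinv (q 1) * W$j$k * q 1)"
  using assms unfolding hat_mat_def unit_fun_def LambdaR_def
  by (simp add: vec_eq_iff is_unit_mult uinv_mult mult.assoc unit_mult_uinv_cancel)

lemma Phi_eq:
  fixes A :: "'a::ring_1 mat3"
  shows "Phi A = (if A \<in> dom J \<and> hat_mat A \<and> units_mat A
                  then Some (J2_mat (LambdaL (matrix_inv A))) else None)"
proof (cases "A \<in> dom J \<and> hat_mat A \<and> units_mat A")
  case True
  then have "units_mat (matrix_inv A)" using dom_J_iff by auto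
  then have "units_mat (LambdaL (matrix_inv A))"
    unfolding LambdaL_eq_diag_scale using units_mat_diag_scale unit_fun_LambdaL_factors by blast
  then show ?thesis unfolding Phi_def J2_eq using True by simp
next
  case False
  show ?thesis unfolding Phi_def by (simp only: if_not_P[OF False])
qed

lemma Phiinv_eq:
  fixes A :: "'a::ring_1 mat3"
  shows "Phiinv A = (if A \<in> dom Jinv \<and> hat_mat A \<and> units_mat (the (Jinv A))
                     then Some (LambdaR (the (Jinv A))) else None)"
  unfolding Phiinv_def by auto

lemma S_hat_iff: "A \<in> S_hat \<longleftrightarrow> A \<in> S_set \<and> hat_mat A"
  unfolding S_hat_def by simp

text \<open>On \<open>S\<close>, \<open>\<Phi>\<close> is \<open>J\<close> followed by a diagonal rescaling that restores the 1's in the first row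
  and column; the same holds for \<open>\<Phi>\<^sup>-\<^sup>1\<close> and \<open>J\<^sup>-\<^sup>1\<close>.\<close>

lemma Phi_S_hat:
  fixes A :: "'a::ring_1 mat3"
  assumes "A \<in> S_hat"
  defines "B \<equiv> J2_mat (LambdaL (matrix_inv A))"
  shows "Phi A = Some B" and "B \<in> S_hat" and "Phiinv B = Some A"
proof -
  let ?N = "matrix_inv A"
  have S: "A \<in> S_set" and h: "hat_mat A" using assms(1) S_hat_iff by auto
  then have inv: "invertible A" and uA: "units_mat A" and uN: "units_mat ?N"
    using S_set_iff by auto
  define d where "d = (\<lambda>j. ?N$1$1 * uinv (?N$j$1))"
  define e where "e = (\<lambda>k. uinv (?N$1$k))"
  have d: "unit_fun d" and e: "unit_fun e" using unit_fun_LambdaL_factors[OF uN] by (simp_all add: d_def e_def)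
  have LN: "LambdaL ?N = diag_scale d ?N e" unfolding LambdaL_eq_diag_scale d_def e_def ..
  show "Phi A = Some B" unfolding Phi_eq B_def using S S_set_eq_dom_J_Jinv h uA by auto
  have "B = diag_scale (\<lambda>j. uinv (e j)) (J2_mat ?N) (\<lambda>k. uinv (d k))"
    unfolding B_def LN by (rule J2_mat_diag_scale[OF uN d e])
  then have BS: "B \<in> S_set"
    using S_set_diag_scale[OF J_S_set(2)[OF S] unit_fun_uinv[OF e] unit_fun_uinv[OF d]] by simp
  have hB: "hat_mat B" unfolding B_def by (rule hat_mat_J2_mat[OF hat_mat_LambdaL[OF uN]])
  show "B \<in> S_hat" using BS hB S_hat_iff by blast
  have "J2_mat B = diag_scale d ?N e"
    unfolding B_def LN[symmetric] using J2_mat_J2_mat units_mat_diag_scale[OF uN d e] LN by simp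
  then have mB: "matrix_inv (J2_mat B) = diag_scale (\<lambda>k. uinv (e k)) A (\<lambda>j. uinv (d j))"
    using matrix_inv_diag_scale[OF invertible_matrix_inv[OF inv] d e] matrix_inv_matrix_inv[OF inv] by simp
  have "uinv (d 1) = 1" using uN unfolding d_def units_mat_def by (simp add: unit_mult_uinv)
  then have "LambdaR (matrix_inv (J2_mat B)) = A" unfolding mB
    by (subst LambdaR_diag_scale_hat_mat[OF h unit_fun_uinv[OF e] unit_fun_uinv[OF d]]) (simp add: vec_eq_iff)
  moreover have "units_mat (matrix_inv (J2_mat B))"
    unfolding mB by (rule units_mat_diag_scale[OF uA unit_fun_uinv[OF e] unit_fun_uinv[OF d]])
  ultimately show "Phiinv B = Some A" unfolding Phiinv_eq using hB Jinv_S_set(1)[OF BS] by auto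
qed

lemma Phiinv_S_hat:
  fixes A :: "'a::ring_1 mat3"
  assumes "A \<in> S_hat"
  defines "B \<equiv> LambdaR (matrix_inv (J2_mat A))"
  shows "Phiinv A = Some B" and "B \<in> S_hat" and "Phi B = Some A"
proof -
  let ?Y = "matrix_inv (J2_mat A)"
  have S: "A \<in> S_set" and h: "hat_mat A" using assms(1) S_hat_iff by auto
  then have uA: "units_mat A" and iJ: "invertible (J2_mat A)" using S_set_iff by auto
  have YS: "?Y \<in> S_set" and JA: "Jinv A = Some ?Y" using Jinv_S_set[OF S] by auto
  then have uY: "units_mat ?Y" using S_set_iff by auto
  show "Phiinv A = Some B" unfolding Phiinv_eq B_def using h JA uY by auto
  define d where "d = (\<lambda>j. uinv (?Y$j$1))"
  define e where "e = (\<lambda>k. uinv (?Y$1$k) * ?Y$1$1)"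
  have d: "unit_fun d" and e: "unit_fun e" using unit_fun_LambdaR_factors[OF uY] by (simp_all add: d_def e_def)
  have LR: "B = diag_scale d ?Y e" unfolding B_def LambdaR_eq_diag_scale d_def e_def ..
  have BS: "B \<in> S_set" unfolding LR by (rule S_set_diag_scale[OF YS d e])
  have hB: "hat_mat B" unfolding B_def by (rule hat_mat_LambdaR[OF uY])
  show "B \<in> S_hat" using BS hB S_hat_iff by blast
  have mB: "matrix_inv B = diag_scale (\<lambda>k. uinv (e k)) (J2_mat A) (\<lambda>j. uinv (d j))"
    unfolding LR using matrix_inv_diag_scale[OF invertible_matrix_inv[OF iJ] d e] matrix_inv_matrix_inv[OF iJ]
    by simp
  have "uinv (e 1) = 1" using uY unfolding e_def units_mat_def by (simp add: unit_mult_uinv)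
  then have "LambdaL (matrix_inv B) = J2_mat A" unfolding mB
    by (subst LambdaL_diag_scale_hat_mat[OF hat_mat_J2_mat[OF h] unit_fun_uinv[OF e] unit_fun_uinv[OF d]])
      (simp add: vec_eq_iff)
  then show "Phi B = Some A"
    unfolding Phi_eq using BS S_set_eq_dom_J_Jinv hB S_set_iff J2_mat_J2_mat[OF uA] by auto
qed

lemma S_hat_if_Phi_twice:
  fixes A :: "'a::ring_1 mat3"
  assumes "A \<in> dom Phi" and "the (Phi A) \<in> dom Phi"
  shows "A \<in> S_hat"
proof -
  let ?N = "matrix_inv A"
  have domJ: "A \<in> dom J" and h: "hat_mat A" and uA: "units_mat A"
    using assms(1) unfolding Phi_eq dom_def by (auto split: if_splits)
  then have inv: "invertible A" and uN: "units_mat ?N" using dom_J_iff by auto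
  define d where "d = (\<lambda>j. ?N$1$1 * uinv (?N$j$1))"
  define e where "e = (\<lambda>k. uinv (?N$1$k))"
  have d: "unit_fun d" and e: "unit_fun e" using unit_fun_LambdaL_factors[OF uN] by (simp_all add: d_def e_def)
  have "the (Phi A) = J2_mat (diag_scale d ?N e)"
    unfolding Phi_eq LambdaL_eq_diag_scale d_def e_def using domJ h uA by simp
  also have "\<dots> = diag_scale (\<lambda>j. uinv (e j)) (J2_mat ?N) (\<lambda>k. uinv (d k))"
    by (rule J2_mat_diag_scale[OF uN d e])
  finally have "diag_scale (\<lambda>j. uinv (e j)) (J2_mat ?N) (\<lambda>k. uinv (d k)) \<in> dom J"
    using assms(2) unfolding Phi_eq dom_def by (auto split: if_splits)
  then have "the (J A) \<in> dom J"
    using dom_J_diag_scale[OF _ unit_fun_uinv[OF e] unit_fun_uinv[OF d]] inv uN by (simp add: J_eq)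
  then show ?thesis using S_set_if_J_twice[OF domJ] h S_hat_iff by blast
qed

lemma S_hat_eq_dom_Phi_Phiinv: "(S_hat :: 'a::ring_1 mat3 set) = dom Phi \<inter> dom Phiinv"
proof (rule set_eqI)
  fix A :: "'a mat3"
  show "A \<in> S_hat \<longleftrightarrow> A \<in> dom Phi \<inter> dom Phiinv"
  proof
    assume "A \<in> S_hat"
    then show "A \<in> dom Phi \<inter> dom Phiinv" using Phi_S_hat(1) Phiinv_S_hat(1) by blast
  next
    assume "A \<in> dom Phi \<inter> dom Phiinv"
    then have "A \<in> dom J" "A \<in> dom Jinv" "hat_mat A"
      unfolding Phi_eq Phiinv_eq dom_def by (auto split: if_splits)
    then show "A \<in> S_hat" using S_set_eq_dom_J_Jinv S_hat_iff by blast
  qed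
qed

theorem theorem2:
  fixes k :: nat
  assumes "k \<ge> 2"
  shows "(S_set :: 'a::ring_1 mat3 set) = dom J \<inter> dom Jinv \<and>
         dom J \<inter> dom Jinv = dom (mpow (J :: 'a mat3 \<Rightarrow> _) k) \<and>
         (S_hat :: 'a mat3 set) = dom Phi \<inter> dom Phiinv \<and>
         dom Phi \<inter> dom Phiinv = dom (mpow (Phi :: 'a mat3 \<Rightarrow> _) k) \<and>
         bij_betw (\<lambda>M. the (J M)) (S_set :: 'a mat3 set) S_set \<and>
         bij_betw (\<lambda>M. the (Phi M)) (S_hat :: 'a mat3 set) S_hat"
proof -
  have J: "\<exists>N\<in>S_set. J M = Some N \<and> Jinv N = Some M" if "M \<in> S_set" for M :: "'a mat3"
    using J_S_set[OF that] by blast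
  have Jinv: "\<exists>N\<in>S_set. Jinv M = Some N \<and> J N = Some M" if "M \<in> S_set" for M :: "'a mat3"
    using Jinv_S_set[OF that] by blast
  have Phi: "\<exists>B\<in>S_hat. Phi A = Some B \<and> Phiinv B = Some A" if "A \<in> S_hat" for A :: "'a mat3"
    using Phi_S_hat[OF that] by blast
  have Phiinv: "\<exists>B\<in>S_hat. Phiinv A = Some B \<and> Phi B = Some A" if "A \<in> S_hat" for A :: "'a mat3"
    using Phiinv_S_hat[OF that] by blast
  have "dom (mpow J k) = (S_set :: 'a mat3 set)"
    by (rule dom_mpow_eq[OF _ S_set_if_J_twice assms]) (use J in blast)
  moreover have "dom (mpow Phi k) = (S_hat :: 'a mat3 set)"
    by (rule dom_mpow_eq[OF _ S_hat_if_Phi_twice assms]) (use Phi in blast)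
  moreover note bij_betw_the_partial_inverse[OF J Jinv] bij_betw_the_partial_inverse[OF Phi Phiinv]
  ultimately show ?thesis
    unfolding S_set_eq_dom_J_Jinv[symmetric] S_hat_eq_dom_Phi_Phiinv[symmetric] by simp
qed


end
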